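(* Let $Z \subset (\mathbb{C}^{\times})^n$ be a very affine linear space. Then the angle map \[ \mathrm{ang}\colon Z \longrightarrow (S^1)^n,\qquad x=(x_1,\dots,x_n)\longmapsto \left(\frac{x_1}{|x_1|},\dots,\frac{x_n}{|x_n|}\right) \] is a homotopy equivalence from $Z$ onto its image $\Theta := \mathrm{ang}(Z)$ (with the subspace topology of $(S^1)^n$).
   Context: $S^1=\{z\in\mathbb{C}:|z|=1\}$; $(\mathbb{C}^\times)^n$ and $(S^1)^n$ carry the Euclidean topology. A very affine linear space is a nonempty closed subvariety $Z\subset(\mathbb{C}^\times)^n$ whose ideal in $\mathbb{C}[x_1^{\pm1},\dots,x_n^{\pm1}]$ is generated by affine linear polynomials $c_0+c_1x_1+\dots+c_nx_n$ with $c_i\in\mathbb{C}$. Equivalently, $Z$ is the image of the complement $\mathbb{P}^d\setminus\bigcup_{j=0}^n V(H_j)$ of an essential projective hyperplane arrangement under $P\mapsto [H_0(P):\dots:H_n(P)]$, where the torus of $\mathbb{P}^n$ is identified with $(\mathbb{C}^\times)^n$ (essential meaning this map is injective). *)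

theory Defs
  imports "HOL-Analysis.Analysis"
begin

definition torus :: "(complex ^ 'n) set" where
  "torus = {x. \<forall>j. x $ j \<noteq> 0}"

definition very_affine_linear_space :: "(complex ^ 'n) set \<Rightarrow> bool" where
  "very_affine_linear_space Z \<longleftrightarrow> Z \<noteq> {} \<and>
     (\<exists>E :: (complex \<times> (complex ^ 'n)) set.
        Z = {x \<in> torus. \<forall>(c, a) \<in> E. c + (\<Sum>j\<in>UNIV. a $ j * x $ j) = 0})"

definition ang :: "complex ^ 'n \<Rightarrow> complex ^ 'n" where
  "ang x = (\<chi> j. x $ j / complex_of_real (cmod (x $ j)))"

definition homotopy_equivalence_map :: "'a topology \<Rightarrow> 'b topology \<Rightarrow> ('a \<Rightarrow> 'b) \<Rightarrow> bool" where
  "homotopy_equivalence_map X Y f \<longleftrightarrow> continuous_map X Y f \<and>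
     (\<exists>g. continuous_map Y X g \<and>
          homotopic_with (\<lambda>h. True) X X (g \<circ> f) id \<and>
          homotopic_with (\<lambda>h. True) Y Y (f \<circ> g) id)"

end

theory Submission
  imports Defs
begin

(* Write Z = L \<inter> torus with L convex (an intersection of affine hyperplanes). For
   \<theta> \<in> ang ` Z and 0 < t \<le> 1 the points x \<in> L whose coordinates x_j all lie in the open sector
   (1 - t) |x_j| < Re (x_j conj \<theta>_j) around the ray through \<theta>_j form a convex subset of Z.
   Every y \<in> Z lies in these sets for all parameters near any (t, ang y), so a partition
   of unity glues local choices into a continuous selection g (t, \<theta>). Then g (1, -) is a
   homotopy inverse of ang: x and g (1, ang x) lie in one convex subset of Z, and
   ang (g (t, \<theta>)) \<rightarrow> \<theta> uniformly as t \<rightarrow> 0 because the sectors shrink onto the rays. *)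

lemma convex_sector:
  fixes w :: complex
  assumes "0 \<le> c"
  shows "convex {z. c * cmod z < Re (z * cnj w)}"
proof (rule convexI)
  fix x y :: complex and u v :: real
  assume x: "x \<in> {z. c * cmod z < Re (z * cnj w)}" and y: "y \<in> {z. c * cmod z < Re (z * cnj w)}"
    and u: "0 \<le> u" and v: "0 \<le> v" and uv: "u + v = 1"
  have "c * cmod (u *\<^sub>R x + v *\<^sub>R y) \<le> u * (c * cmod x) + v * (c * cmod y)"
    using mult_left_mono[OF norm_triangle_ineq[of "u *\<^sub>R x" "v *\<^sub>R y"] assms] u v
    by (simp add: algebra_simps)
  also have "\<dots> < u * Re (x * cnj w) + v * Re (y * cnj w)"
    using x y u v uv mult_left_mono[of "c * cmod x" "Re (x * cnj w)" u]
      mult_left_mono[of "c * cmod y" "Re (y * cnj w)" v]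
    by (cases "u = 0") (auto intro: add_less_le_mono)
  also have "\<dots> = Re ((u *\<^sub>R x + v *\<^sub>R y) * cnj w)"
    by (simp add: scaleR_conv_of_real algebra_simps)
  finally show "u *\<^sub>R x + v *\<^sub>R y \<in> {z. c * cmod z < Re (z * cnj w)}" by simp
qed

lemma norm_sgn_diff_sq_less:
  fixes z w :: complex
  assumes "cmod w = 1" and "(1 - t) * cmod z < Re (z * cnj w)"
  shows "cmod (sgn z - w)^2 < 2 * t"
proof -
  have "z \<noteq> 0" using assms(2) by auto
  have "cmod (sgn z - w)^2 = cmod (sgn z)^2 + cmod w^2 - 2 * Re (sgn z * cnj w)"
    unfolding cmod_power2 by (simp add: power2_eq_square algebra_simps)
  also have "\<dots> = 2 - 2 * (Re (z * cnj w) / cmod z)"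
    using \<open>z \<noteq> 0\<close> assms(1) by (simp add: norm_sgn) (simp add: sgn_eq add_divide_distrib)
  also have "\<dots> < 2 * t"
    using assms(2) \<open>z \<noteq> 0\<close> by (simp add: field_simps)
  finally show ?thesis .
qed

lemma Re_mul_cnj_sgn: "Re (z * cnj (sgn z)) = cmod z"
proof (cases "z = 0")
  case False
  then have "z * cnj (sgn z) = complex_of_real (cmod z)"
    by (simp add: sgn_eq flip: complex_norm_square) (simp add: power2_eq_square)
  then show ?thesis by simp
qed simp

lemma norm_le_l1_norm_cart: "norm v \<le> (\<Sum>j\<in>UNIV. norm (v $ j))"
  unfolding norm_vec_def by (rule L2_set_le_sum) auto

lemma convex_affine_equation:
  fixes a :: "complex ^ 'n"
  shows "convex {x. c + (\<Sum>j\<in>UNIV. a $ j * x $ j) = 0}"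
proof -
  have "linear (\<lambda>x::complex^'n. \<Sum>j\<in>UNIV. a $ j * x $ j)"
    by (rule linearI) (simp_all add: sum.distrib scaleR_sum_right distrib_left)
  then have "convex ((\<lambda>x::complex^'n. \<Sum>j\<in>UNIV. a $ j * x $ j) -` {- c})"
    by (intro convex_linear_vimage) auto
  then show ?thesis by (simp add: vimage_def add_eq_0_iff)
qed

(* A special case of Michael's selection theorem. *)
lemma convex_valued_continuous_selection:
  fixes D :: "'a::{metric_space,second_countable_topology} set"
    and G :: "'a \<Rightarrow> 'b::real_normed_vector set"
  assumes convex: "\<And>d. d \<in> D \<Longrightarrow> convex (G d)"
    and locally_common: "\<And>d. d \<in> D \<Longrightarrow> \<exists>y N. open N \<and> d \<in> N \<and> (\<forall>d'\<in>D \<inter> N. y \<in> G d')"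
  obtains g where "continuous_on D g" "\<And>d. d \<in> D \<Longrightarrow> g d \<in> G d"
proof -
  define \<B> where "\<B> = {N. open N \<and> (\<exists>y. \<forall>d'\<in>D \<inter> N. y \<in> G d')}"
  have "D \<subseteq> \<Union>\<B>"
    using locally_common unfolding \<B>_def by blast
  then obtain \<C> where D_cover: "D \<subseteq> \<Union>\<C>"
      and refines: "\<And>U. U \<in> \<C> \<Longrightarrow> open U \<and> (\<exists>T. T \<in> \<B> \<and> U \<subseteq> T)"
      and locally_finite: "\<And>x. x \<in> D \<Longrightarrow> \<exists>V. open V \<and> x \<in> V \<and> finite {U. U \<in> \<C> \<and> U \<inter> V \<noteq> {}}"
    by (rule paracompact) (auto simp: \<B>_def)
  have "\<forall>U\<in>\<C>. \<exists>y. \<forall>d'\<in>D \<inter> U. y \<in> G d'"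
    using refines unfolding \<B>_def by blast
  then obtain Y where Y: "\<And>U d'. U \<in> \<C> \<Longrightarrow> d' \<in> D \<Longrightarrow> d' \<in> U \<Longrightarrow> Y U \<in> G d'"
    by (metis IntI)
  obtain H :: "['a set, 'a] \<Rightarrow> real"
    where H_cont: "\<And>U. U \<in> \<C> \<Longrightarrow> continuous_on D (H U) \<and> (\<forall>x\<in>D. 0 \<le> H U x)"
      and H_zero: "\<And>x U. \<lbrakk>U \<in> \<C>; x \<in> D; x \<notin> U\<rbrakk> \<Longrightarrow> H U x = 0"
      and H_one: "\<And>x. x \<in> D \<Longrightarrow> supp_sum (\<lambda>U. H U x) \<C> = 1"
      and H_finite: "\<And>x. x \<in> D \<Longrightarrow> \<exists>V. open V \<and> x \<in> V \<and> finite {U \<in> \<C>. \<exists>x\<in>V. H U x \<noteq> 0}"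
    by (rule subordinate_partition_of_unity [OF D_cover _ locally_finite]) (use refines in auto)
  define g where "g x = supp_sum (\<lambda>U. H U x *\<^sub>R Y U) \<C>" for x
  show ?thesis
  proof
    show "continuous_on D g"
      unfolding continuous_on_eq_continuous_within
    proof
      fix a assume "a \<in> D"
      then obtain N where N: "open N" "a \<in> N" and fin: "finite {U \<in> \<C>. \<exists>x\<in>N. H U x \<noteq> 0}"
        using H_finite by blast
      show "continuous (at a within D) g"
      proof (rule continuous_transform_within_openin)
        show "continuous (at a within D) (\<lambda>x. \<Sum>U\<in>{U \<in> \<C>. \<exists>x\<in>N. H U x \<noteq> 0}. H U x *\<^sub>R Y U)"
          using H_cont \<open>a \<in> D\<close>
          by (force intro: continuous_intros simp: continuous_on_eq_continuous_within)
        show "openin (top_of_set D) (D \<inter> N)" "a \<in> D \<inter> N"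
          using N \<open>a \<in> D\<close> by auto
        show "(\<Sum>U\<in>{U \<in> \<C>. \<exists>x\<in>N. H U x \<noteq> 0}. H U x *\<^sub>R Y U) = g x" if "x \<in> D \<inter> N" for x
          using that by (auto simp: g_def supp_sum_def support_on_def intro: sum.mono_neutral_right [OF fin])
      qed
    qed
    show "g d \<in> G d" if "d \<in> D" for d
      unfolding g_def
      by (rule convex_supp_sum [OF convex[OF that] H_one[OF that]]) (metis that H_cont H_zero Y)
  qed
qed

lemma continuous_on_homotopy_extend_at_zero:
  fixes f :: "real \<times> 'a::metric_space \<Rightarrow> 'a"
  assumes f: "continuous_on ({0<..1} \<times> S) f"
    and bound: "\<And>s x. s \<in> {0<..1} \<Longrightarrow> x \<in> S \<Longrightarrow> dist (f (s, x)) x \<le> \<phi> s"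
    and \<phi>: "(\<phi> \<longlongrightarrow> 0) (at_right 0)"
  shows "continuous_on ({0..1} \<times> S) (\<lambda>(s, x). if s = 0 then x else f (s, x))"
  unfolding continuous_on_iff
proof (intro ballI allI impI)
  fix q :: "real \<times> 'a" and e :: real
  assume q: "q \<in> {0..1} \<times> S" and "0 < e"
  then obtain s x where q_eq: "q = (s, x)" and s: "0 \<le> s" "s \<le> 1" and "x \<in> S"
    by auto
  let ?h = "\<lambda>(s, x). if s = 0 then x else f (s, x)"
  show "\<exists>d>0. \<forall>q'\<in>{0..1} \<times> S. dist q' q < d \<longrightarrow> dist (?h q') (?h q) < e"
  proof (cases "s = 0")
    case False
    then have "q \<in> {0<..1} \<times> S" using q q_eq s by auto
    then obtain d where "d > 0"
        and d: "\<forall>q'\<in>{0<..1} \<times> S. dist q' q < d \<longrightarrow> dist (f q') (f q) < e"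
      using f \<open>0 < e\<close> unfolding continuous_on_iff by blast
    show ?thesis
    proof (intro exI conjI ballI impI)
      show "0 < min d s" using \<open>d > 0\<close> s False by simp
      fix q' assume q': "q' \<in> {0..1} \<times> S" and "dist q' q < min d s"
      then have "dist (fst q') s < s"
        using dist_fst_le[of q' q] q_eq by simp
      then have "fst q' > 0" by (simp add: dist_real_def)
      then show "dist (?h q') (?h q) < e"
        using d q' q_eq False \<open>dist q' q < min d s\<close> by (auto simp: case_prod_beta)
    qed
  next
    case True
    have "\<exists>d>0. \<forall>s'>0. s' < d \<longrightarrow> dist (\<phi> s') 0 < e / 2"
      using \<phi> \<open>0 < e\<close> unfolding tendsto_iff eventually_at_right_field by (meson half_gt_zero)
    then obtain d where "d > 0" and d: "\<And>s'. 0 < s' \<Longrightarrow> s' < d \<Longrightarrow> dist (\<phi> s') 0 < e / 2"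
      by blast
    show ?thesis
    proof (intro exI conjI ballI impI)
      show "0 < min d (e / 2)" using \<open>d > 0\<close> \<open>0 < e\<close> by simp
      fix q' assume q': "q' \<in> {0..1} \<times> S" and close: "dist q' q < min d (e / 2)"
      then obtain s' x' where q'_eq: "q' = (s', x')" and s': "0 \<le> s'" "s' \<le> 1" and "x' \<in> S"
        by auto
      have "s' < d" and x'x: "dist x' x < e / 2"
        using close dist_fst_le[of q' q] dist_snd_le[of q' q] q_eq q'_eq True s'
        by (auto simp: dist_real_def)
      show "dist (?h q') (?h q) < e"
      proof (cases "s' = 0")
        case False
        then have "dist (f (s', x')) x' < e / 2"
          using bound[of s' x'] d[of s'] s' \<open>s' < d\<close> \<open>x' \<in> S\<close> by (simp add: dist_real_def)
        then show ?thesis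
          using x'x dist_triangle[of "f (s', x')" x x'] False True q_eq q'_eq by simp
      qed (use x'x \<open>0 < e\<close> True q_eq q'_eq in simp)
    qed
  qed
qed

lemma ang_nth: "ang x $ j = sgn (x $ j)"
  by (simp add: ang_def sgn_eq)

lemma norm_ang_nth: "x \<in> torus \<Longrightarrow> cmod (ang x $ j) = 1"
  by (simp add: ang_nth torus_def norm_sgn)

lemma continuous_on_ang: "continuous_on torus ang"
  unfolding ang_def torus_def
  by (intro continuous_on_vec_lambda continuous_intros) auto

(* For |\<theta>_j| = 1 the j-th condition describes the open sector of half-angle arccos (1 - t)
   around the ray through \<theta>_j; for t = 1 it is an open half-plane. *)
definition angular_cone :: "complex ^ 'n \<Rightarrow> real \<Rightarrow> (complex ^ 'n) set" where
  "angular_cone \<theta> t = {x. \<forall>j. (1 - t) * cmod (x $ j) < Re (x $ j * cnj (\<theta> $ j))}"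

lemma convex_angular_cone:
  assumes "t \<le> 1"
  shows "convex (angular_cone \<theta> t)"
proof -
  have cone_eq: "angular_cone \<theta> t = (\<Inter>j. (\<lambda>x. x $ j) -` {z. (1 - t) * cmod z < Re (z * cnj (\<theta> $ j))})"
    by (auto simp: angular_cone_def)
  have "convex ((\<lambda>x. x $ j) -` {z. (1 - t) * cmod z < Re (z * cnj (\<theta> $ j))})" for j
    using assms by (intro convex_linear_vimage convex_sector bounded_linear.linear[OF bounded_linear_vec_nth]) simp
  then show ?thesis
    unfolding cone_eq by (rule convex_INT)
qed

lemma angular_cone_subset_torus: "angular_cone \<theta> t \<subseteq> torus"
proof
  fix x assume "x \<in> angular_cone \<theta> t"
  then have "x $ j \<noteq> 0" for j
    by (auto simp: angular_cone_def dest: spec[of _ j])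
  then show "x \<in> torus"
    by (simp add: torus_def)
qed

lemma mem_angular_cone_ang: "x \<in> torus \<Longrightarrow> 0 < t \<Longrightarrow> x \<in> angular_cone (ang x) t"
proof -
  assume "x \<in> torus" "0 < t"
  then have "(1 - t) * cmod (x $ j) < Re (x $ j * cnj (ang x $ j))" for j
    unfolding ang_nth Re_mul_cnj_sgn by (simp add: torus_def)
  then show ?thesis
    by (simp add: angular_cone_def)
qed

lemma open_angular_cone_parameters: "open {(t, \<theta>). y \<in> angular_cone \<theta> t}"
proof -
  have params_eq: "{(t, \<theta>). y \<in> angular_cone \<theta> t} =
      (\<Inter>j. {q. (1 - fst q) * cmod (y $ j) < Re (y $ j * cnj (snd q $ j))})"
    by (auto simp: angular_cone_def)
  show ?thesis
    unfolding params_eq by (intro open_INT ballI open_Collect_less continuous_intros) auto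
qed

lemma dist_ang_angular_cone:
  fixes \<theta> :: "complex ^ 'n"
  assumes "\<And>j. cmod (\<theta> $ j) = 1" and "x \<in> angular_cone \<theta> t"
  shows "dist (ang x) \<theta> \<le> CARD('n) * sqrt (2 * t)"
proof -
  have "cmod ((ang x - \<theta>) $ j) \<le> sqrt (2 * t)" for j
  proof -
    have "cmod (sgn (x $ j) - \<theta> $ j)^2 < 2 * t"
      using assms by (intro norm_sgn_diff_sq_less) (auto simp: angular_cone_def)
    then show ?thesis
      by (simp add: ang_nth real_le_rsqrt)
  qed
  then have "(\<Sum>j\<in>UNIV. cmod ((ang x - \<theta>) $ j)) \<le> CARD('n) * sqrt (2 * t)"
    using sum_bounded_above[of UNIV "\<lambda>j. cmod ((ang x - \<theta>) $ j)" "sqrt (2 * t)"] by simp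
  then show ?thesis
    using norm_le_l1_norm_cart[of "ang x - \<theta>"] by (simp add: dist_norm)
qed

lemma angular_cone_selection:
  fixes L :: "(complex ^ 'n) set"
  assumes "convex L"
  obtains g where "continuous_on ({0<..1} \<times> ang ` (L \<inter> torus)) g"
    and "\<And>t \<theta>. t \<in> {0<..1} \<Longrightarrow> \<theta> \<in> ang ` (L \<inter> torus) \<Longrightarrow> g (t, \<theta>) \<in> L \<inter> angular_cone \<theta> t"
proof -
  let ?D = "{0<..1} \<times> ang ` (L \<inter> torus)"
  have "\<exists>y N. open N \<and> p \<in> N \<and> (\<forall>p'\<in>?D \<inter> N. y \<in> L \<inter> angular_cone (snd p') (fst p'))"
    if "p \<in> ?D" for p
  proof -
    obtain t y where p: "p = (t, ang y)" and "0 < t" "y \<in> L \<inter> torus"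
      using \<open>p \<in> ?D\<close> by auto
    show ?thesis
    proof (intro exI conjI)
      show "open {(t, \<theta>). y \<in> angular_cone \<theta> t}"
        by (rule open_angular_cone_parameters)
      show "p \<in> {(t, \<theta>). y \<in> angular_cone \<theta> t}"
        using mem_angular_cone_ang \<open>0 < t\<close> \<open>y \<in> L \<inter> torus\<close> p by auto
    qed (use \<open>y \<in> L \<inter> torus\<close> in auto)
  qed
  moreover have "convex (L \<inter> angular_cone (snd p) (fst p))" if "p \<in> ?D" for p
    using that assms by (auto intro!: convex_Int convex_angular_cone)
  ultimately obtain g where "continuous_on ?D g" "\<And>p. p \<in> ?D \<Longrightarrow> g p \<in> L \<inter> angular_cone (snd p) (fst p)"
    using convex_valued_continuous_selection[of ?D "\<lambda>p. L \<inter> angular_cone (snd p) (fst p)"] by blast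
  then show ?thesis
    using that by auto
qed

lemma homotopic_selection_ang_id:
  fixes L :: "(complex ^ 'n) set"
  assumes "convex L"
    and g1_cont: "continuous_on (ang ` (L \<inter> torus)) g1"
    and g1_mem: "\<And>\<theta>. \<theta> \<in> ang ` (L \<inter> torus) \<Longrightarrow> g1 \<theta> \<in> L \<inter> angular_cone \<theta> 1"
  shows "homotopic_with_canon (\<lambda>h. True) (L \<inter> torus) (L \<inter> torus) (g1 \<circ> ang) id"
proof (rule homotopic_with_linear)
  show "continuous_on (L \<inter> torus) (g1 \<circ> ang)"
    by (intro continuous_on_compose continuous_on_subset[OF continuous_on_ang]
        continuous_on_subset[OF g1_cont]) auto
  show "closed_segment ((g1 \<circ> ang) x) (id x) \<subseteq> L \<inter> torus" if "x \<in> L \<inter> torus" for x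
  proof -
    have "g1 (ang x) \<in> L \<inter> angular_cone (ang x) 1" "x \<in> L \<inter> angular_cone (ang x) 1"
      using g1_mem mem_angular_cone_ang[of x 1] that by auto
    then have "closed_segment (g1 (ang x)) x \<subseteq> L \<inter> angular_cone (ang x) 1"
      using assms(1) by (intro closed_segment_subset convex_Int convex_angular_cone) auto
    then show ?thesis
      using angular_cone_subset_torus[of "ang x" 1] by auto
  qed
qed simp

lemma homotopic_id_ang_selection:
  fixes Z :: "(complex ^ 'n) set"
  assumes "Z \<subseteq> torus"
    and g_cont: "continuous_on ({0<..1} \<times> ang ` Z) g"
    and g_mem: "\<And>t \<theta>. t \<in> {0<..1} \<Longrightarrow> \<theta> \<in> ang ` Z \<Longrightarrow> g (t, \<theta>) \<in> Z \<inter> angular_cone \<theta> t"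
  shows "homotopic_with_canon (\<lambda>h. True) (ang ` Z) (ang ` Z) id (\<lambda>\<theta>. ang (g (1, \<theta>)))"
  unfolding homotopic_with_def
proof (intro exI conjI)
  let ?h = "\<lambda>(s, \<theta>). if s = 0 then \<theta> else (ang \<circ> g) (s, \<theta>)"
  have "continuous_on ({0<..1} \<times> ang ` Z) (ang \<circ> g)"
    using g_mem assms(1)
    by (intro continuous_on_compose g_cont continuous_on_subset[OF continuous_on_ang]) force
  moreover have "dist ((ang \<circ> g) (s, \<theta>)) \<theta> \<le> CARD('n) * sqrt (2 * s)"
    if "s \<in> {0<..1}" "\<theta> \<in> ang ` Z" for s \<theta>
  proof -
    have "cmod (\<theta> $ j) = 1" for j
      using \<open>\<theta> \<in> ang ` Z\<close> norm_ang_nth assms(1) by auto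
    then show ?thesis
      using g_mem[OF that] by (simp add: dist_ang_angular_cone)
  qed
  moreover have "((\<lambda>s. CARD('n) * sqrt (2 * s)) \<longlongrightarrow> 0) (at_right 0)"
    by (rule tendsto_eq_intros refl | simp)+
  ultimately have "continuous_on ({0..1} \<times> ang ` Z) ?h"
    by (rule continuous_on_homotopy_extend_at_zero)
  moreover have "?h q \<in> ang ` Z" if q: "q \<in> {0..1} \<times> ang ` Z" for q
  proof -
    obtain s \<theta> where "q = (s, \<theta>)" "0 \<le> s" "s \<le> 1" "\<theta> \<in> ang ` Z"
      using q by auto
    then show ?thesis
      using g_mem[of s \<theta>] by (cases "s = 0") auto
  qed
  ultimately show "continuous_map (prod_topology (top_of_set {0..1}) (top_of_set (ang ` Z)))
      (top_of_set (ang ` Z)) ?h"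
    by auto
qed auto

theorem homotopy_equivalence_map_ang_convex:
  fixes L :: "(complex ^ 'n) set"
  assumes "convex L"
  shows "homotopy_equivalence_map (top_of_set (L \<inter> torus)) (top_of_set (ang ` (L \<inter> torus))) ang"
proof -
  obtain g where g_cont: "continuous_on ({0<..1} \<times> ang ` (L \<inter> torus)) g"
    and g_mem: "\<And>t \<theta>. t \<in> {0<..1} \<Longrightarrow> \<theta> \<in> ang ` (L \<inter> torus) \<Longrightarrow> g (t, \<theta>) \<in> L \<inter> angular_cone \<theta> t"
    using angular_cone_selection[OF assms] by blast
  define g1 where "g1 \<theta> = g (1, \<theta>)" for \<theta>
  have g1_cont: "continuous_on (ang ` (L \<inter> torus)) g1"
    unfolding g1_def by (rule continuous_on_compose2[OF g_cont]) (auto intro!: continuous_intros)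
  have g1_mem: "g1 \<theta> \<in> L \<inter> angular_cone \<theta> 1" if "\<theta> \<in> ang ` (L \<inter> torus)" for \<theta>
    using g_mem[of 1 \<theta>] that unfolding g1_def by auto
  have "continuous_map (top_of_set (L \<inter> torus)) (top_of_set (ang ` (L \<inter> torus))) ang"
    using continuous_on_subset[OF continuous_on_ang] by auto
  moreover have "continuous_map (top_of_set (ang ` (L \<inter> torus))) (top_of_set (L \<inter> torus)) g1"
    using g1_cont g1_mem angular_cone_subset_torus by auto
  moreover have "homotopic_with_canon (\<lambda>h. True) (L \<inter> torus) (L \<inter> torus) (g1 \<circ> ang) id"
    using assms g1_cont g1_mem by (rule homotopic_selection_ang_id)
  moreover have "homotopic_with_canon (\<lambda>h. True) (ang ` (L \<inter> torus)) (ang ` (L \<inter> torus)) id (ang \<circ> g1)"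
    using homotopic_id_ang_selection[of "L \<inter> torus" g] g_cont g_mem angular_cone_subset_torus
    unfolding g1_def comp_def by blast
  ultimately show ?thesis
    unfolding homotopy_equivalence_map_def by (meson homotopic_with_symD)
qed

theorem theoremA:
  fixes Z :: "(complex ^ 'n) set"
  assumes "very_affine_linear_space Z"
  shows "homotopy_equivalence_map (subtopology euclidean Z) (subtopology euclidean (ang ` Z)) ang"
proof -
  obtain E :: "(complex \<times> (complex ^ 'n)) set"
    where Z_eq: "Z = {x \<in> torus. \<forall>(c, a) \<in> E. c + (\<Sum>j\<in>UNIV. a $ j * x $ j) = 0}"
    using assms unfolding very_affine_linear_space_def by blast
  define L where "L = (\<Inter>(c, a)\<in>E. {x :: complex ^ 'n. c + (\<Sum>j\<in>UNIV. a $ j * x $ j) = 0})"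
  have "convex L"
    unfolding L_def by (auto intro!: convex_INT convex_affine_equation)
  moreover have "Z = L \<inter> torus"
    unfolding Z_eq L_def by auto
  ultimately show ?thesis
    using homotopy_equivalence_map_ang_convex by metis
qed

end
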